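(* For every $A\subset\Omega$, $$\overline{F_A}=\{\phi\in\mathcal H:\phi_\pi\in\overline{F_A\cap\mathcal H_\pi}\}=\overline{F_A\cap\mathcal H_\pi}\oplus\mathcal H_\pi^\perp,$$ $$F_A^\perp=(F_A\cap\mathcal H_\pi)^\perp\cap\mathcal H_\pi,$$ and $$\overline{F_A}\cap\mathcal H_\pi=\overline{F_A\cap\mathcal H_\pi}.$$
   Context: Let $\mathcal H$ be a complex Hilbert space; $\overline V$ is the closure of $V\subset\mathcal H$. A projection is a bounded self-adjoint idempotent operator; $\wedge_\alpha p_\alpha$ is the projection onto the intersection of ranges. Let $S$ be a set; for each $t\in S$ let $\Gamma(t)$ be a countable set and for $a\in\Gamma(t)$ let $p^t_a$ be a projection on $\mathcal H$ with $\sum_{a\in\Gamma(t)}p^t_a=I$ (strong convergence). Let $\pi=\{p^t_a\}$ and $p^{t_1,\dots,t_k}_{a_1,\dots,a_k}=\wedge_{i=1}^kp^{t_i}_{a_i}$. $\pi$ commutes on $\phi$ if $W\phi=V\phi$ whenever $W,V$ are finite products of elements of $\pi$ with the same factors (with multiplicity) in possibly different orders; $\mathcal H_\pi$ is the closed subspace of such $\phi$, $p_\pi$ its projection, $\phi_\pi=p_\pi\phi$. Let $\Omega=\prod_{t\in S}\Gamma(t)$. For $A\subset\Omega$, $F_A=\{\phi\in\mathcal H:$ for every $\omega\in A$ there are $t_1,\dots,t_k\in S$ with $p^{t_1,\dots,t_k}_{\omega_{t_1},\dots,\omega_{t_k}}\phi=0\}$ (a vector space). *)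

theory Defs
  imports "HOL-Analysis.Analysis" "HOL-Library.Multiset"
begin

text \<open>A complex Hilbert space is modelled as a real Hilbert space (type class
  real_inner + complete_space) with a complex structure J (multiplication by i),
  i.e. a real-linear isometric map with J (J x) = - x.  The complex inner product is
  cinner x y = inner x y + i * inner x (J y) (up to convention), so complex
  orthogonality means inner x y = 0 and inner x (J y) = 0.\<close>

definition complex_structure :: "('a::real_inner \<Rightarrow> 'a) \<Rightarrow> bool" where
  "complex_structure J \<longleftrightarrow> linear J \<and> (\<forall>x. J (J x) = - x) \<and> (\<forall>x y. inner (J x) (J y) = inner x y)"

definition orth :: "('a::real_inner \<Rightarrow> 'a) \<Rightarrow> 'a set \<Rightarrow> 'a set" where
  "orth J V = {x. \<forall>y\<in>V. inner x y = 0 \<and> inner x (J y) = 0}"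

definition is_projection :: "('a::real_inner \<Rightarrow> 'a) \<Rightarrow> ('a \<Rightarrow> 'a) \<Rightarrow> bool" where
  "is_projection J p \<longleftrightarrow> bounded_linear p \<and> (\<forall>x. p (J x) = J (p x))
     \<and> (\<forall>x y. inner (p x) y = inner x (p y)) \<and> (\<forall>x. p (p x) = p x)"

definition proj_onto :: "('a::real_inner \<Rightarrow> 'a) \<Rightarrow> 'a set \<Rightarrow> 'a \<Rightarrow> 'a" where
  "proj_onto J V x = (THE y. y \<in> V \<and> x - y \<in> orth J V)"

text \<open>Meet of the projections p t (\<omega> t), t \<in> T: projection onto the intersection of
  their ranges (for T = {} this is the identity).\<close>
definition meet_proj :: "('a::real_inner \<Rightarrow> 'a) \<Rightarrow> ('s \<Rightarrow> 'g \<Rightarrow> 'a \<Rightarrow> 'a) \<Rightarrow> 's set \<Rightarrow> ('s \<Rightarrow> 'g) \<Rightarrow> 'a \<Rightarrow> 'a" where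
  "meet_proj J p T \<omega> = proj_onto J (\<Inter>t\<in>T. range (p t (\<omega> t)))"

definition prod_op :: "('s \<Rightarrow> 'g \<Rightarrow> 'a \<Rightarrow> 'a) \<Rightarrow> ('s \<times> 'g) list \<Rightarrow> 'a \<Rightarrow> 'a" where
  "prod_op p xs = foldr (\<lambda>(t,a) f. p t a \<circ> f) xs id"

definition commutes_on :: "('s \<Rightarrow> 'g \<Rightarrow> 'a \<Rightarrow> 'a) \<Rightarrow> 's set \<Rightarrow> ('s \<Rightarrow> 'g set) \<Rightarrow> 'a \<Rightarrow> bool" where
  "commutes_on p S \<Gamma> \<phi> \<longleftrightarrow> (\<forall>xs ys. set xs \<subseteq> Sigma S \<Gamma> \<longrightarrow> mset xs = mset ys \<longrightarrow>
      prod_op p xs \<phi> = prod_op p ys \<phi>)"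

definition H_pi :: "('s \<Rightarrow> 'g \<Rightarrow> 'a \<Rightarrow> 'a) \<Rightarrow> 's set \<Rightarrow> ('s \<Rightarrow> 'g set) \<Rightarrow> 'a set" where
  "H_pi p S \<Gamma> = {\<phi>. commutes_on p S \<Gamma> \<phi>}"

definition F_set :: "('a::real_inner \<Rightarrow> 'a) \<Rightarrow> ('s \<Rightarrow> 'g \<Rightarrow> 'a \<Rightarrow> 'a) \<Rightarrow> 's set \<Rightarrow> ('s \<Rightarrow> 'g) set \<Rightarrow> 'a set" where
  "F_set J p S A = {\<phi>. \<forall>\<omega>\<in>A. \<exists>T. finite T \<and> T \<subseteq> S \<and> meet_proj J p T \<omega> \<phi> = 0}"

end

theory Submission
  imports Defs
begin

text \<open>
  Let \<open>P\<close> be the orthogonal projection onto the closed subspace \<open>H\<^sub>\<pi>\<close>. Since \<open>H\<^sub>\<pi>\<close> is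
  invariant under every \<open>p t a\<close>, \<open>P\<close> commutes with them, so it preserves each joint range
  \<open>M = (\<Inter>t\<in>T. range (p t (\<omega> t)))\<close>, hence \<open>M\<^sup>\<bottom>\<close>, hence \<open>F\<^sub>A\<close>.
  The key point is \<open>F\<^sub>A\<^sup>\<bottom> \<subseteq> H\<^sub>\<pi>\<close>: projections from one resolution of the identity are
  mutually orthogonal, so on \<open>M\<close> a product of projections \<open>p t a\<close> with \<open>t \<in> T\<close> acts as
  the identity or as \<open>0\<close> according to the set of its factors, and two products \<open>W\<close>, \<open>V\<close>
  with the same factors agree on \<open>M\<close>. Hence for \<open>z \<perp> F\<^sub>A\<close> and \<open>d = W z - V z\<close> the
  vector \<open>W\<^sup>* d - V\<^sup>* d\<close> lies in \<open>F\<^sub>A\<close>, and pairing it with \<open>z\<close> gives \<open>\<parallel>d\<parallel>\<^sup>2 = 0\<close>.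
  Therefore \<open>H\<^sub>\<pi>\<^sup>\<bottom> \<subseteq> F\<^sub>A\<^sup>\<bottom>\<^sup>\<bottom> = closure F\<^sub>A\<close>, and the four identities follow by
  splitting \<open>\<phi> = P \<phi> + (\<phi> - P \<phi>)\<close>.
\<close>

section \<open>Orthogonal projections in Hilbert spaces\<close>

lemma subspace_closure:
  fixes V :: "'a::real_normed_vector set"
  assumes "subspace V"
  shows "subspace (closure V)"
  unfolding subspace_def
proof (intro conjI ballI allI)
  show "0 \<in> closure V"
    using assms closure_subset subspace_0 by blast
  have "V + V \<subseteq> V"
    using assms by (auto simp: set_plus_def subspace_add)
  then show "x + y \<in> closure V" if "x \<in> closure V" "y \<in> closure V" for x y
    using that closure_sum[of V V] closure_mono by blast
  have "(*\<^sub>R) c ` V \<subseteq> V" for c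
    using assms by (auto simp: subspace_scale)
  then show "c *\<^sub>R x \<in> closure V" if "x \<in> closure V" for c x
    using that closure_scaleR[of c V] closure_mono by blast
qed

lemma parallelogram_law:
  fixes a b :: "'a::real_inner"
  shows "(norm (a + b))\<^sup>2 + (norm (a - b))\<^sup>2 = 2 * (norm a)\<^sup>2 + 2 * (norm b)\<^sup>2"
  by (simp add: power2_norm_eq_inner algebra_simps inner_commute)

lemma Cauchy_if_dist_le:
  fixes X :: "nat \<Rightarrow> 'a::metric_space"
  assumes "\<And>m n. dist (X m) (X n) \<le> e m + e n" and "e \<longlonglongrightarrow> 0"
  shows "Cauchy X"
proof (rule metric_CauchyI)
  fix \<epsilon> :: real assume "\<epsilon> > 0"
  then obtain N where N: "\<And>n. n \<ge> N \<Longrightarrow> \<bar>e n\<bar> < \<epsilon> / 2"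
    using LIMSEQ_D[OF \<open>e \<longlonglongrightarrow> 0\<close>, of "\<epsilon> / 2"] by auto
  have "dist (X m) (X n) < \<epsilon>" if "m \<ge> N" "n \<ge> N" for m n
    using N[OF \<open>m \<ge> N\<close>] N[OF \<open>n \<ge> N\<close>] assms(1)[of m n] by linarith
  then show "\<exists>N. \<forall>m\<ge>N. \<forall>n\<ge>N. dist (X m) (X n) < \<epsilon>"
    by blast
qed

lemma nearest_point_exists:
  fixes C :: "'a::{real_inner,complete_space} set"
  assumes "closed C" "convex C" "C \<noteq> {}"
  obtains y where "y \<in> C" "\<And>z. z \<in> C \<Longrightarrow> norm (x - y) \<le> norm (x - z)"
proof -
  define d where "d = infdist x C"
  have "d \<ge> 0"
    by (simp add: d_def infdist_nonneg)
  have d_le: "d \<le> norm (x - z)" if "z \<in> C" for z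
    using infdist_le[OF that] by (simp add: d_def dist_norm)
  have "\<exists>m\<in>C. (norm (x - m))\<^sup>2 < d\<^sup>2 + inverse (Suc n)" for n
  proof -
    have "d < sqrt (d\<^sup>2 + inverse (Suc n))"
      using \<open>d \<ge> 0\<close> real_less_rsqrt by simp
    then have "(INF m\<in>C. dist x m) < sqrt (d\<^sup>2 + inverse (Suc n))"
      using \<open>C \<noteq> {}\<close> by (simp add: d_def infdist_notempty)
    then obtain m where "m \<in> C" "dist x m < sqrt (d\<^sup>2 + inverse (Suc n))"
      using \<open>C \<noteq> {}\<close> by (subst (asm) cINF_less_iff) auto
    then show ?thesis
      by (smt (verit) dist_norm norm_le_square real_le_lsqrt)
  qed
  then obtain m where m_in: "\<And>n. m n \<in> C"
    and m_near: "\<And>n. (norm (x - m n))\<^sup>2 < d\<^sup>2 + inverse (Suc n)"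
    by metis
  have m_close: "(norm (m k - m n))\<^sup>2 \<le> 2 * inverse (Suc k) + 2 * inverse (Suc n)" for k n
  proof -
    have "midpoint (m k) (m n) \<in> C"
      using \<open>convex C\<close> m_in closed_segment_subset midpoint_in_closed_segment by blast
    moreover have "(x - m k) + (x - m n) = 2 *\<^sub>R (x - midpoint (m k) (m n))"
      by (simp add: midpoint_def algebra_simps scaleR_2)
    ultimately have "2 * d \<le> norm ((x - m k) + (x - m n))"
      using d_le by simp
    then have "(2 * d)\<^sup>2 \<le> (norm ((x - m k) + (x - m n)))\<^sup>2"
      using \<open>d \<ge> 0\<close> by (intro power_mono) auto
    then show ?thesis
      using parallelogram_law[of "x - m k" "x - m n"] m_near[of k] m_near[of n]
      by (simp add: power_mult_distrib norm_minus_commute)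
  qed
  have m_dist: "dist (m k) (m n) \<le> sqrt (2 * inverse (Suc k)) + sqrt (2 * inverse (Suc n))" for k n
  proof -
    have "dist (m k) (m n) \<le> sqrt (2 * inverse (Suc k) + 2 * inverse (Suc n))"
      using m_close[of k n] unfolding dist_norm by (rule real_le_rsqrt)
    also have "\<dots> \<le> sqrt (2 * inverse (Suc k)) + sqrt (2 * inverse (Suc n))"
      by (rule sqrt_add_le_add_sqrt) simp_all
    finally show ?thesis .
  qed
  have "(\<lambda>n. sqrt (2 * inverse (Suc n))) \<longlonglongrightarrow> 0"
    using tendsto_real_sqrt[OF tendsto_mult_right_zero[OF LIMSEQ_inverse_real_of_nat, of 2]] by simp
  then have "Cauchy m"
    by (rule Cauchy_if_dist_le[OF m_dist])
  then obtain y where "m \<longlonglongrightarrow> y"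
    using Cauchy_convergent_iff convergent_def by blast
  have "(\<lambda>n. (norm (x - m n))\<^sup>2) \<longlonglongrightarrow> (norm (x - y))\<^sup>2"
    using \<open>m \<longlonglongrightarrow> y\<close> by (intro tendsto_intros)
  moreover have "(\<lambda>n. d\<^sup>2 + inverse (Suc n)) \<longlonglongrightarrow> d\<^sup>2"
    using tendsto_add[OF tendsto_const LIMSEQ_inverse_real_of_nat] by simp
  ultimately have "(norm (x - y))\<^sup>2 \<le> d\<^sup>2"
    using m_near by (intro LIMSEQ_le) (auto intro!: less_imp_le)
  then have "norm (x - y) \<le> d"
    using \<open>d \<ge> 0\<close> by (rule power2_le_imp_le)
  moreover have "y \<in> C"
    using \<open>closed C\<close> m_in \<open>m \<longlonglongrightarrow> y\<close> closed_sequentially by blast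
  ultimately show ?thesis
    using that d_le order_trans by meson
qed

lemma norm_diff_scaleR_squared:
  fixes w z :: "'a::real_inner"
  shows "(norm (w - c *\<^sub>R z))\<^sup>2 = (norm w)\<^sup>2 - 2 * c * (z \<bullet> w) + c\<^sup>2 * (z \<bullet> z)"
  unfolding power2_norm_eq_inner
  by (simp add: inner_diff_left inner_diff_right inner_commute power2_eq_square algebra_simps)

lemma nearest_point_orthogonal:
  fixes M :: "'a::real_inner set"
  assumes "subspace M" "y \<in> M" and nearest: "\<And>z. z \<in> M \<Longrightarrow> norm (x - y) \<le> norm (x - z)"
  shows "x - y \<in> M\<^sup>\<bottom>"
  unfolding orthogonal_comp_def orthogonal_def
proof (intro CollectI ballI)
  fix z assume "z \<in> M"
  show "z \<bullet> (x - y) = 0"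
  proof (cases "z = 0")
    case False
    define c where "c = (z \<bullet> (x - y)) / (z \<bullet> z)"
    have "y + c *\<^sub>R z \<in> M"
      using assms \<open>z \<in> M\<close> by (simp add: subspace_add subspace_scale)
    then have "(norm (x - y))\<^sup>2 \<le> (norm ((x - y) - c *\<^sub>R z))\<^sup>2"
      using nearest by (simp add: power_mono diff_diff_eq)
    also have "\<dots> = (norm (x - y))\<^sup>2 - (z \<bullet> (x - y))\<^sup>2 / (z \<bullet> z)"
      using False unfolding norm_diff_scaleR_squared by (simp add: c_def power2_eq_square field_simps)
    finally have "(z \<bullet> (x - y))\<^sup>2 / (z \<bullet> z) \<le> 0"
      by simp
    moreover have "z \<bullet> z > 0"
      using False by simp
    ultimately show ?thesis
      by (simp add: divide_le_0_iff)
  qed simp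
qed

lemma orthogonal_decomposition_exists:
  fixes M :: "'a::{real_inner,complete_space} set"
  assumes "subspace M" "closed M"
  obtains y where "y \<in> M" "x - y \<in> M\<^sup>\<bottom>"
proof -
  have "M \<noteq> {}"
    using \<open>subspace M\<close> subspace_0 by blast
  then obtain y where "y \<in> M" "\<And>z. z \<in> M \<Longrightarrow> norm (x - y) \<le> norm (x - z)"
    using nearest_point_exists \<open>closed M\<close> subspace_imp_convex[OF \<open>subspace M\<close>] by blast
  then show ?thesis
    using that nearest_point_orthogonal[OF \<open>subspace M\<close>] by blast
qed

lemma orthogonal_decomposition_unique:
  assumes "subspace M" "y \<in> M" "x - y \<in> M\<^sup>\<bottom>" "y' \<in> M" "x - y' \<in> M\<^sup>\<bottom>"
  shows "y = y'"
proof -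
  have "y - y' \<in> M"
    using assms by (simp add: subspace_diff)
  moreover have "y - y' \<in> M\<^sup>\<bottom>"
    using subspace_diff[OF subspace_orthogonal_comp \<open>x - y' \<in> M\<^sup>\<bottom>\<close> \<open>x - y \<in> M\<^sup>\<bottom>\<close>] by simp
  ultimately have "y - y' \<in> M \<inter> M\<^sup>\<bottom>"
    by blast
  then show ?thesis
    using orthogonal_Int_0[OF \<open>subspace M\<close>] by simp
qed

lemma orthogonal_comp_invariant:
  assumes adjoint: "\<And>x y. q x \<bullet> y = x \<bullet> r y" and invariant: "\<And>y. y \<in> M \<Longrightarrow> r y \<in> M"
    and "x \<in> M\<^sup>\<bottom>"
  shows "q x \<in> M\<^sup>\<bottom>"
  unfolding orthogonal_comp_def orthogonal_def
proof (intro CollectI ballI)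
  fix y assume "y \<in> M"
  have "y \<bullet> q x = r y \<bullet> x"
    by (metis adjoint inner_commute)
  also have "\<dots> = 0"
    using \<open>x \<in> M\<^sup>\<bottom>\<close> invariant[OF \<open>y \<in> M\<close>] by (simp add: orthogonal_comp_def orthogonal_def)
  finally show "y \<bullet> q x = 0" .
qed

definition orthogonal_projection :: "'a::real_inner set \<Rightarrow> 'a \<Rightarrow> 'a" where
  "orthogonal_projection M x = (THE y. y \<in> M \<and> x - y \<in> M\<^sup>\<bottom>)"

context
  fixes M :: "'a::{real_inner,complete_space} set"
  assumes subspace: "subspace M" and closed: "closed M"
begin

lemma orthogonal_projection_eqI:
  assumes "y \<in> M" "x - y \<in> M\<^sup>\<bottom>"
  shows "orthogonal_projection M x = y"
  unfolding orthogonal_projection_def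
proof (rule the_equality)
  show "y \<in> M \<and> x - y \<in> M\<^sup>\<bottom>"
    using assms ..
  show "y' = y" if "y' \<in> M \<and> x - y' \<in> M\<^sup>\<bottom>" for y'
    using that assms orthogonal_decomposition_unique[OF subspace] by blast
qed

lemma orthogonal_projection_in: "orthogonal_projection M x \<in> M"
  and orthogonal_projection_orthogonal: "x - orthogonal_projection M x \<in> M\<^sup>\<bottom>"
proof -
  obtain y where "y \<in> M" "x - y \<in> M\<^sup>\<bottom>"
    by (rule orthogonal_decomposition_exists[OF subspace closed])
  then show "orthogonal_projection M x \<in> M" "x - orthogonal_projection M x \<in> M\<^sup>\<bottom>"
    using orthogonal_projection_eqI by simp_all
qed

lemma orthogonal_projection_id: "x \<in> M \<Longrightarrow> orthogonal_projection M x = x"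
  by (rule orthogonal_projection_eqI) (auto simp: subspace_0 subspace_orthogonal_comp)

lemma orthogonal_projection_eq_0_iff: "orthogonal_projection M x = 0 \<longleftrightarrow> x \<in> M\<^sup>\<bottom>"
  using orthogonal_projection_orthogonal[of x] orthogonal_projection_eqI[of 0 x] subspace_0[OF subspace]
  by force

lemma orthogonal_projection_self_adjoint:
  "orthogonal_projection M x \<bullet> y = x \<bullet> orthogonal_projection M y"
proof -
  have "orthogonal_projection M x \<bullet> (y - orthogonal_projection M y) = 0"
    "(x - orthogonal_projection M x) \<bullet> orthogonal_projection M y = 0"
    using orthogonal_projection_in orthogonal_projection_orthogonal
    by (auto simp: orthogonal_comp_def orthogonal_def inner_commute)
  then show ?thesis
    by (simp add: inner_diff_left inner_diff_right)
qed

lemma bounded_linear_orthogonal_projection: "bounded_linear (orthogonal_projection M)"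
proof (rule bounded_linear_intro[where K = 1])
  fix x y
  show "orthogonal_projection M (x + y) = orthogonal_projection M x + orthogonal_projection M y"
  proof (rule orthogonal_projection_eqI)
    show "orthogonal_projection M x + orthogonal_projection M y \<in> M"
      using orthogonal_projection_in subspace by (simp add: subspace_add)
    have "(x - orthogonal_projection M x) + (y - orthogonal_projection M y) \<in> M\<^sup>\<bottom>"
      using orthogonal_projection_orthogonal by (simp add: subspace_add subspace_orthogonal_comp)
    then show "x + y - (orthogonal_projection M x + orthogonal_projection M y) \<in> M\<^sup>\<bottom>"
      by (simp add: algebra_simps)
  qed
next
  fix r :: real and x
  show "orthogonal_projection M (r *\<^sub>R x) = r *\<^sub>R orthogonal_projection M x"
    using orthogonal_projection_in orthogonal_projection_orthogonal subspace
    by (intro orthogonal_projection_eqI)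
      (auto simp: subspace_scale subspace_orthogonal_comp simp flip: scaleR_diff_right)
next
  fix x
  have "orthogonal (orthogonal_projection M x) (x - orthogonal_projection M x)"
    using orthogonal_projection_in orthogonal_projection_orthogonal
    by (auto simp: orthogonal_comp_def)
  then have "(norm x)\<^sup>2 = (norm (orthogonal_projection M x))\<^sup>2 + (norm (x - orthogonal_projection M x))\<^sup>2"
    using norm_add_Pythagorean by fastforce
  then have "(norm (orthogonal_projection M x))\<^sup>2 \<le> (norm x)\<^sup>2"
    by simp
  then have "norm (orthogonal_projection M x) \<le> norm x"
    by (rule power2_le_imp_le) simp
  then show "norm (orthogonal_projection M x) \<le> norm x * 1"
    by simp
qed

lemma orthogonal_projection_commute:
  assumes "linear q" "\<And>x y. q x \<bullet> y = x \<bullet> q y" "\<And>y. y \<in> M \<Longrightarrow> q y \<in> M"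
  shows "orthogonal_projection M (q x) = q (orthogonal_projection M x)"
proof (rule orthogonal_projection_eqI)
  show "q (orthogonal_projection M x) \<in> M"
    using assms(3) orthogonal_projection_in by blast
  have "q (x - orthogonal_projection M x) \<in> M\<^sup>\<bottom>"
    using assms(2,3) orthogonal_projection_orthogonal by (rule orthogonal_comp_invariant)
  then show "q x - q (orthogonal_projection M x) \<in> M\<^sup>\<bottom>"
    using \<open>linear q\<close> by (simp add: linear_diff)
qed

end

lemma orthogonal_comp_orthogonal_comp_subset_closure:
  fixes V :: "'a::{real_inner,complete_space} set"
  assumes "subspace V"
  shows "V\<^sup>\<bottom>\<^sup>\<bottom> \<subseteq> closure V"
proof
  fix x assume x: "x \<in> V\<^sup>\<bottom>\<^sup>\<bottom>"
  let ?C = "closure V"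
  have C: "subspace ?C" "closed ?C"
    using subspace_closure[OF assms] by simp_all
  let ?y = "orthogonal_projection ?C x"
  have "x - ?y \<in> ?C\<^sup>\<bottom>"
    using orthogonal_projection_orthogonal[OF C] .
  then have "x - ?y \<in> V\<^sup>\<bottom>"
    using orthogonal_comp_anti_mono[OF closure_subset] by blast
  then have "(x - ?y) \<bullet> x = 0"
    using x by (auto simp: orthogonal_comp_def orthogonal_def)
  moreover have "?y \<bullet> (x - ?y) = 0"
    using orthogonal_projection_in[OF C] \<open>x - ?y \<in> ?C\<^sup>\<bottom>\<close>
    by (auto simp: orthogonal_comp_def orthogonal_def)
  ultimately have "(x - ?y) \<bullet> (x - ?y) = 0"
    by (simp add: inner_diff_left inner_diff_right inner_commute)
  then show "x \<in> ?C"
    using orthogonal_projection_in[OF C, of x] by simp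
qed

section \<open>Complex structure and resolutions of the identity\<close>

lemma orth_eq_orthogonal_comp:
  assumes "\<And>y. y \<in> V \<Longrightarrow> J y \<in> V"
  shows "orth J V = V\<^sup>\<bottom>"
  using assms by (auto simp: orth_def orthogonal_comp_def orthogonal_def inner_commute)

lemma proj_onto_eq_orthogonal_projection:
  assumes "\<And>y. y \<in> V \<Longrightarrow> J y \<in> V"
  shows "proj_onto J V = orthogonal_projection V"
  using orth_eq_orthogonal_comp[OF assms]
  by (simp add: proj_onto_def orthogonal_projection_def fun_eq_iff)

lemma complex_structure_adjoint:
  assumes "complex_structure J"
  shows "J x \<bullet> y = x \<bullet> - J y"
proof -
  have "J x \<bullet> y = J x \<bullet> J (J (- y))"
    using assms by (simp add: complex_structure_def)
  also have "\<dots> = x \<bullet> J (- y)"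
    using assms unfolding complex_structure_def by blast
  also have "J (- y) = - J y"
    using assms by (simp add: complex_structure_def linear_neg)
  finally show ?thesis .
qed

lemma resolution_orthogonal:
  fixes q :: "'g \<Rightarrow> 'a::real_inner \<Rightarrow> 'a"
  assumes self_adjoint: "\<And>c x y. c \<in> I \<Longrightarrow> q c x \<bullet> y = x \<bullet> q c y"
    and idempotent: "\<And>c x. c \<in> I \<Longrightarrow> q c (q c x) = q c x"
    and resolution: "((\<lambda>c. q c m) has_sum m) I"
    and "a \<in> I" "b \<in> I" "a \<noteq> b" "q b m = m"
  shows "q a m = 0"
proof -
  have square: "q c m \<bullet> m = q c m \<bullet> q c m" if "c \<in> I" for c
    using idempotent[OF that, of m] self_adjoint[OF that, of "q c m" m] by simp
  have "((\<lambda>c. q c m \<bullet> m) has_sum (q a m \<bullet> m + q b m \<bullet> m)) {a, b}"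
    using \<open>a \<noteq> b\<close> by (simp add: has_sum_finite_iff)
  moreover have "((\<lambda>c. q c m \<bullet> m) has_sum m \<bullet> m) I"
    using has_sum_bounded_linear[OF bounded_linear_inner_left resolution] .
  ultimately have "q a m \<bullet> m + q b m \<bullet> m \<le> m \<bullet> m"
  proof (rule has_sum_mono_neutral)
    show "q c m \<bullet> m \<ge> 0" if "c \<in> I - {a, b}" for c
      using square that by simp
  qed (use \<open>a \<in> I\<close> \<open>b \<in> I\<close> in auto)
  then have "q a m \<bullet> q a m \<le> 0"
    using square[OF \<open>a \<in> I\<close>] \<open>q b m = m\<close> by simp
  then have "q a m \<bullet> q a m = 0"
    using inner_ge_zero by (rule order_antisym)
  then show ?thesis
    by simp
qed

section \<open>Products of projections and joint ranges\<close>

lemma prod_op_Nil [simp]: "prod_op p [] = id"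
  by (simp add: prod_op_def)

lemma prod_op_Cons [simp]: "prod_op p ((t, a) # xs) = p t a \<circ> prod_op p xs"
  by (simp add: prod_op_def)

lemma set_subset_if_mset_eq: "mset xs = mset ys \<Longrightarrow> set xs \<subseteq> X \<Longrightarrow> set ys \<subseteq> X"
  by (metis set_mset_mset)

lemma prod_op_append: "prod_op p (xs @ ys) = prod_op p xs \<circ> prod_op p ys"
  by (induction xs) (auto simp: comp_assoc)

definition joint_range :: "('s \<Rightarrow> 'g \<Rightarrow> 'a \<Rightarrow> 'a) \<Rightarrow> 's set \<Rightarrow> ('s \<Rightarrow> 'g) \<Rightarrow> 'a set" where
  "joint_range p T \<omega> = (\<Inter>t\<in>T. range (p t (\<omega> t)))"

lemma joint_range_anti_mono: "T \<subseteq> T' \<Longrightarrow> joint_range p T' \<omega> \<subseteq> joint_range p T \<omega>"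
  by (auto simp: joint_range_def)

locale projection_family =
  fixes J :: "'a::{real_inner, complete_space} \<Rightarrow> 'a"
    and S :: "'s set" and \<Gamma> :: "'s \<Rightarrow> 'g set"
    and p :: "'s \<Rightarrow> 'g \<Rightarrow> 'a \<Rightarrow> 'a"
  assumes complex_structure: "complex_structure J"
    and projection: "\<And>t a. t \<in> S \<Longrightarrow> a \<in> \<Gamma> t \<Longrightarrow> is_projection J (p t a)"
    and resolution: "\<And>t \<phi>. t \<in> S \<Longrightarrow> ((\<lambda>a. p t a \<phi>) has_sum \<phi>) (\<Gamma> t)"
begin

context
  fixes t a
  assumes index: "t \<in> S" "a \<in> \<Gamma> t"
begin

lemma bounded_linear_p: "bounded_linear (p t a)"
  and p_J: "p t a (J x) = J (p t a x)"
  and p_self_adjoint: "p t a x \<bullet> y = x \<bullet> p t a y"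
  and p_idempotent: "p t a (p t a x) = p t a x"
  using projection[OF index] by (simp_all add: is_projection_def)

lemma linear_p: "linear (p t a)"
  using bounded_linear_p bounded_linear.linear by blast

end

lemma p_orthogonal:
  assumes "t \<in> S" "a \<in> \<Gamma> t" "b \<in> \<Gamma> t" "a \<noteq> b" "p t b m = m"
  shows "p t a m = 0"
  using resolution_orthogonal[OF p_self_adjoint p_idempotent resolution] assms by blast

lemma bounded_linear_prod_op: "set xs \<subseteq> Sigma S \<Gamma> \<Longrightarrow> bounded_linear (prod_op p xs)"
proof (induction xs)
  case (Cons z xs)
  obtain t a where "z = (t, a)" and index: "t \<in> S" "a \<in> \<Gamma> t"
    using Cons.prems by (cases z) auto
  then show ?case
    using bounded_linear_compose[OF bounded_linear_p[OF index]] Cons by (simp add: o_def)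
qed (simp add: id_def bounded_linear_ident)

lemma prod_op_J: "set xs \<subseteq> Sigma S \<Gamma> \<Longrightarrow> prod_op p xs (J x) = J (prod_op p xs x)"
proof (induction xs)
  case (Cons z xs)
  obtain t a where "z = (t, a)" and index: "t \<in> S" "a \<in> \<Gamma> t"
    using Cons.prems by (cases z) auto
  then show ?case
    using Cons p_J[OF index] by simp
qed simp

lemma prod_op_adjoint:
  "set xs \<subseteq> Sigma S \<Gamma> \<Longrightarrow> prod_op p xs x \<bullet> y = x \<bullet> prod_op p (rev xs) y"
proof (induction xs arbitrary: y)
  case (Cons z xs)
  obtain t a where z: "z = (t, a)" and index: "t \<in> S" "a \<in> \<Gamma> t"
    using Cons.prems by (cases z) auto
  have "prod_op p (z # xs) x \<bullet> y = prod_op p xs x \<bullet> p t a y"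
    using p_self_adjoint[OF index] by (simp add: z)
  also have "\<dots> = x \<bullet> prod_op p (rev (z # xs)) y"
    using Cons by (simp add: z prod_op_append)
  finally show ?case .
qed simp

context
  fixes T :: "'s set" and \<omega> :: "'s \<Rightarrow> 'g"
  assumes T: "T \<subseteq> S" and \<omega>: "\<omega> \<in> Pi T \<Gamma>"
begin

lemma index_joint_range: "t \<in> T \<Longrightarrow> t \<in> S \<and> \<omega> t \<in> \<Gamma> t"
  using T \<omega> by blast

lemma mem_joint_range_iff: "m \<in> joint_range p T \<omega> \<longleftrightarrow> (\<forall>t\<in>T. p t (\<omega> t) m = m)"
proof -
  have "m \<in> range (p t (\<omega> t)) \<longleftrightarrow> p t (\<omega> t) m = m" if "t \<in> T" for t
  proof
    assume "m \<in> range (p t (\<omega> t))"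
    then show "p t (\<omega> t) m = m"
      using p_idempotent index_joint_range[OF that] by auto
  qed (use rangeI[of "p t (\<omega> t)" m] in simp)
  then show ?thesis
    by (auto simp: joint_range_def)
qed

lemma subspace_joint_range: "subspace (joint_range p T \<omega>)"
  unfolding joint_range_def
  using linear_subspace_image[OF linear_p subspace_UNIV] index_joint_range
  by (auto intro: subspace_Int)

lemma closed_joint_range: "closed (joint_range p T \<omega>)"
proof -
  have "joint_range p T \<omega> = (\<Inter>t\<in>T. {m. p t (\<omega> t) m = id m})"
    by (auto simp: mem_joint_range_iff)
  then show ?thesis
    using index_joint_range bounded_linear_p
    by (auto intro!: closed_INT closed_Collect_eq linear_continuous_on continuous_on_id)
qed

lemma J_joint_range: "m \<in> joint_range p T \<omega> \<Longrightarrow> J m \<in> joint_range p T \<omega>"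
  using index_joint_range p_J by (simp add: mem_joint_range_iff)

lemma meet_proj_eq_orthogonal_projection:
  "meet_proj J p T \<omega> = orthogonal_projection (joint_range p T \<omega>)"
  using proj_onto_eq_orthogonal_projection[OF J_joint_range]
  by (simp add: meet_proj_def joint_range_def)

lemma p_joint_range:
  assumes "m \<in> joint_range p T \<omega>" "t \<in> T" "a \<in> \<Gamma> t"
  shows "p t a m = (if a = \<omega> t then m else 0)"
  using assms index_joint_range[OF \<open>t \<in> T\<close>] p_orthogonal
  by (auto simp: mem_joint_range_iff)

lemma prod_op_joint_range:
  assumes "m \<in> joint_range p T \<omega>"
  shows "set xs \<subseteq> Sigma T \<Gamma> \<Longrightarrow> prod_op p xs m = (if \<forall>(t, a)\<in>set xs. a = \<omega> t then m else 0)"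
proof (induction xs)
  case (Cons z xs)
  obtain t a where z: "z = (t, a)" and "t \<in> T" "a \<in> \<Gamma> t"
    using Cons.prems by (cases z) auto
  then show ?case
    using Cons linear_0[OF linear_p] index_joint_range p_joint_range[OF assms]
    by auto
qed simp

lemma prod_op_joint_range_mset_eq:
  assumes "m \<in> joint_range p T \<omega>" "set xs \<subseteq> Sigma T \<Gamma>" "mset xs = mset ys"
  shows "prod_op p xs m = prod_op p ys m"
proof -
  have "set ys = set xs"
    using mset_eq_setD[OF \<open>mset xs = mset ys\<close>] by simp
  then show ?thesis
    using assms prod_op_joint_range by simp
qed

end

section \<open>The commuting part \<open>H\<^sub>\<pi>\<close>\<close>

abbreviation H\<pi> :: "'a set" where
  "H\<pi> \<equiv> H_pi p S \<Gamma>"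

lemma H_pi_eq_INT:
  "H\<pi> = (\<Inter>(xs, ys)\<in>{(xs, ys). set xs \<subseteq> Sigma S \<Gamma> \<and> mset xs = mset ys}.
            {\<phi>. prod_op p xs \<phi> = prod_op p ys \<phi>})"
  by (auto simp: H_pi_def commutes_on_def)

lemma subspace_H_pi: "subspace H\<pi>"
proof -
  have "subspace {\<phi>. prod_op p xs \<phi> - prod_op p ys \<phi> = 0}"
    if "set xs \<subseteq> Sigma S \<Gamma>" "mset xs = mset ys" for xs ys
    using bounded_linear_prod_op[OF that(1)] bounded_linear_prod_op[OF set_subset_if_mset_eq[OF that(2,1)]]
    by (intro linear_subspace_kernel linear_compose_sub bounded_linear.linear)
  then show ?thesis
    unfolding H_pi_eq_INT by (intro subspace_Int) auto
qed

lemma closed_H_pi: "closed H\<pi>"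
proof -
  have "closed {\<phi>. prod_op p xs \<phi> = prod_op p ys \<phi>}"
    if "set xs \<subseteq> Sigma S \<Gamma>" "mset xs = mset ys" for xs ys
    using bounded_linear_prod_op[OF that(1)] bounded_linear_prod_op[OF set_subset_if_mset_eq[OF that(2,1)]]
    by (intro closed_Collect_eq linear_continuous_on)
  then show ?thesis
    unfolding H_pi_eq_INT by (intro closed_INT) auto
qed

lemma mem_H_piD:
  "\<phi> \<in> H\<pi> \<Longrightarrow> set xs \<subseteq> Sigma S \<Gamma> \<Longrightarrow> mset xs = mset ys \<Longrightarrow> prod_op p xs \<phi> = prod_op p ys \<phi>"
  by (simp add: H_pi_def commutes_on_def)

lemma J_H_pi:
  assumes "\<phi> \<in> H\<pi>"
  shows "J \<phi> \<in> H\<pi>"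
  unfolding H_pi_def commutes_on_def mem_Collect_eq
proof (intro allI impI)
  fix xs ys assume xs: "set xs \<subseteq> Sigma S \<Gamma>" and eq: "mset xs = mset ys"
  then show "prod_op p xs (J \<phi>) = prod_op p ys (J \<phi>)"
    using mem_H_piD[OF assms xs eq] prod_op_J[OF xs] prod_op_J[OF set_subset_if_mset_eq[OF eq xs]]
    by simp
qed

lemma p_H_pi:
  assumes "\<phi> \<in> H\<pi>" "t \<in> S" "a \<in> \<Gamma> t"
  shows "p t a \<phi> \<in> H\<pi>"
  unfolding H_pi_def commutes_on_def mem_Collect_eq
proof (intro allI impI)
  fix xs ys assume "set xs \<subseteq> Sigma S \<Gamma>" "mset xs = mset ys"
  then have "prod_op p (xs @ [(t, a)]) \<phi> = prod_op p (ys @ [(t, a)]) \<phi>"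
    using assms by (intro mem_H_piD) auto
  then show "prod_op p xs (p t a \<phi>) = prod_op p ys (p t a \<phi>)"
    by (simp add: prod_op_append)
qed

lemma orthogonal_projection_H_pi_commute:
  "t \<in> S \<Longrightarrow> a \<in> \<Gamma> t \<Longrightarrow> orthogonal_projection H\<pi> (p t a x) = p t a (orthogonal_projection H\<pi> x)"
  using orthogonal_projection_commute[OF subspace_H_pi closed_H_pi linear_p p_self_adjoint p_H_pi] .

lemma orthogonal_projection_H_pi_joint_range:
  assumes "T \<subseteq> S" "\<omega> \<in> Pi T \<Gamma>" "m \<in> joint_range p T \<omega>"
  shows "orthogonal_projection H\<pi> m \<in> joint_range p T \<omega>"
proof -
  have "p t (\<omega> t) (orthogonal_projection H\<pi> m) = orthogonal_projection H\<pi> m" if "t \<in> T" for t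
    using orthogonal_projection_H_pi_commute[of t "\<omega> t" m] index_joint_range[OF assms(1,2) that]
      mem_joint_range_iff[OF assms(1,2)] assms(3) that
    by simp
  then show ?thesis
    using mem_joint_range_iff[OF assms(1,2)] by blast
qed

end

section \<open>The subspace \<open>F\<^sub>A\<close>\<close>

locale projection_family_subset = projection_family J S \<Gamma> p
  for J :: "'a::{real_inner, complete_space} \<Rightarrow> 'a" and S :: "'s set" and \<Gamma> :: "'s \<Rightarrow> 'g set"
    and p :: "'s \<Rightarrow> 'g \<Rightarrow> 'a \<Rightarrow> 'a" +
  fixes A :: "('s \<Rightarrow> 'g) set"
  assumes points: "A \<subseteq> (\<Pi>\<^sub>E t\<in>S. \<Gamma> t)"
begin

abbreviation F :: "'a set" where
  "F \<equiv> F_set J p S A"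

lemma points_Pi: "\<omega> \<in> A \<Longrightarrow> T \<subseteq> S \<Longrightarrow> \<omega> \<in> Pi T \<Gamma>"
  using points by (auto simp: PiE_def Pi_def)

lemma mem_F_set_iff: "\<phi> \<in> F \<longleftrightarrow> (\<forall>\<omega>\<in>A. \<exists>T. finite T \<and> T \<subseteq> S \<and> \<phi> \<in> (joint_range p T \<omega>)\<^sup>\<bottom>)"
proof -
  have "meet_proj J p T \<omega> \<phi> = 0 \<longleftrightarrow> \<phi> \<in> (joint_range p T \<omega>)\<^sup>\<bottom>" if "\<omega> \<in> A" "T \<subseteq> S" for T \<omega>
    using points_Pi[OF that] that(2) meet_proj_eq_orthogonal_projection
      orthogonal_projection_eq_0_iff[OF subspace_joint_range closed_joint_range]
    by simp
  then show ?thesis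
    by (simp add: F_set_def cong: conj_cong)
qed

lemma F_set_invariant:
  assumes "\<And>T \<omega> x. T \<subseteq> S \<Longrightarrow> \<omega> \<in> A \<Longrightarrow> x \<in> (joint_range p T \<omega>)\<^sup>\<bottom> \<Longrightarrow> q x \<in> (joint_range p T \<omega>)\<^sup>\<bottom>"
    and "\<phi> \<in> F"
  shows "q \<phi> \<in> F"
  unfolding mem_F_set_iff
proof
  fix \<omega> assume "\<omega> \<in> A"
  then obtain T where "finite T" "T \<subseteq> S" "\<phi> \<in> (joint_range p T \<omega>)\<^sup>\<bottom>"
    using \<open>\<phi> \<in> F\<close> unfolding mem_F_set_iff by blast
  then show "\<exists>T. finite T \<and> T \<subseteq> S \<and> q \<phi> \<in> (joint_range p T \<omega>)\<^sup>\<bottom>"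
    using assms(1)[OF \<open>T \<subseteq> S\<close> \<open>\<omega> \<in> A\<close>] by blast
qed

lemma subspace_F_set: "subspace F"
  unfolding subspace_def
proof (intro conjI ballI allI)
  show "0 \<in> F"
    unfolding mem_F_set_iff using subspace_0[OF subspace_orthogonal_comp] by blast
next
  fix x y assume "x \<in> F" "y \<in> F"
  show "x + y \<in> F"
    unfolding mem_F_set_iff
  proof
    fix \<omega> assume "\<omega> \<in> A"
    obtain T1 where "finite T1" "T1 \<subseteq> S" "x \<in> (joint_range p T1 \<omega>)\<^sup>\<bottom>"
      using \<open>x \<in> F\<close> \<open>\<omega> \<in> A\<close> unfolding mem_F_set_iff by blast
    obtain T2 where "finite T2" "T2 \<subseteq> S" "y \<in> (joint_range p T2 \<omega>)\<^sup>\<bottom>"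
      using \<open>y \<in> F\<close> \<open>\<omega> \<in> A\<close> unfolding mem_F_set_iff by blast
    have "x \<in> (joint_range p (T1 \<union> T2) \<omega>)\<^sup>\<bottom>"
      using \<open>x \<in> (joint_range p T1 \<omega>)\<^sup>\<bottom>\<close>
        orthogonal_comp_anti_mono[OF joint_range_anti_mono[of T1 "T1 \<union> T2"]] by blast
    moreover have "y \<in> (joint_range p (T1 \<union> T2) \<omega>)\<^sup>\<bottom>"
      using \<open>y \<in> (joint_range p T2 \<omega>)\<^sup>\<bottom>\<close>
        orthogonal_comp_anti_mono[OF joint_range_anti_mono[of T2 "T1 \<union> T2"]] by blast
    ultimately have "x + y \<in> (joint_range p (T1 \<union> T2) \<omega>)\<^sup>\<bottom>"
      by (simp add: subspace_add subspace_orthogonal_comp)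
    then show "\<exists>T. finite T \<and> T \<subseteq> S \<and> x + y \<in> (joint_range p T \<omega>)\<^sup>\<bottom>"
      using \<open>finite T1\<close> \<open>finite T2\<close> \<open>T1 \<subseteq> S\<close> \<open>T2 \<subseteq> S\<close> by blast
  qed
next
  fix c x assume "x \<in> F"
  then show "c *\<^sub>R x \<in> F"
    by (rule F_set_invariant[where q = "(*\<^sub>R) c", rotated])
      (simp add: subspace_scale subspace_orthogonal_comp)
qed

lemma J_F_set: "\<phi> \<in> F \<Longrightarrow> J \<phi> \<in> F"
proof (rule F_set_invariant[where q = J])
  fix T \<omega> x assume "T \<subseteq> S" "\<omega> \<in> A" and x: "x \<in> (joint_range p T \<omega>)\<^sup>\<bottom>"
  then have T: "T \<subseteq> S" "\<omega> \<in> Pi T \<Gamma>"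
    using points_Pi by blast+
  have "- J y \<in> joint_range p T \<omega>" if "y \<in> joint_range p T \<omega>" for y
    using subspace_neg[OF subspace_joint_range[OF T] J_joint_range[OF T that]] .
  with complex_structure_adjoint[OF complex_structure]
  show "J x \<in> (joint_range p T \<omega>)\<^sup>\<bottom>"
    using x by (rule orthogonal_comp_invariant)
qed

lemma orthogonal_projection_H_pi_F_set: "\<phi> \<in> F \<Longrightarrow> orthogonal_projection H\<pi> \<phi> \<in> F"
proof (rule F_set_invariant[where q = "orthogonal_projection H\<pi>"])
  fix T \<omega> x assume "T \<subseteq> S" "\<omega> \<in> A" and x: "x \<in> (joint_range p T \<omega>)\<^sup>\<bottom>"
  then have T: "T \<subseteq> S" "\<omega> \<in> Pi T \<Gamma>"
    using points_Pi by blast+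
  show "orthogonal_projection H\<pi> x \<in> (joint_range p T \<omega>)\<^sup>\<bottom>"
    using orthogonal_projection_self_adjoint[OF subspace_H_pi closed_H_pi]
      orthogonal_projection_H_pi_joint_range[OF T] x
    by (rule orthogonal_comp_invariant)
qed

lemma orthogonal_comp_F_set_subset_H_pi: "F\<^sup>\<bottom> \<subseteq> H\<pi>"
proof
  fix z assume z: "z \<in> F\<^sup>\<bottom>"
  show "z \<in> H\<pi>"
    unfolding H_pi_def commutes_on_def mem_Collect_eq
  proof (intro allI impI)
    fix xs ys assume xs: "set xs \<subseteq> Sigma S \<Gamma>" and eq: "mset xs = mset ys"
    have ys: "set ys \<subseteq> Sigma S \<Gamma>"
      using set_subset_if_mset_eq[OF eq xs] .
    define d where "d = prod_op p xs z - prod_op p ys z"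
    define u where "u = prod_op p (rev xs) d - prod_op p (rev ys) d"
    have "u \<in> F"
      unfolding mem_F_set_iff
    proof
      fix \<omega> assume "\<omega> \<in> A"
      define T where "T = fst ` set xs"
      have "T \<subseteq> S"
        using xs by (auto simp: T_def)
      then have T: "T \<subseteq> S" "\<omega> \<in> Pi T \<Gamma>"
        using points_Pi[OF \<open>\<omega> \<in> A\<close>] by blast+
      have "set xs \<subseteq> Sigma T \<Gamma>"
        using xs by (force simp: T_def)
      have "m \<bullet> u = 0" if m: "m \<in> joint_range p T \<omega>" for m
      proof -
        have "m \<bullet> u = prod_op p xs m \<bullet> d - prod_op p ys m \<bullet> d"
          by (simp add: u_def inner_diff_right prod_op_adjoint[OF xs] prod_op_adjoint[OF ys])
        also have "prod_op p xs m = prod_op p ys m"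
          using prod_op_joint_range_mset_eq[OF T m \<open>set xs \<subseteq> Sigma T \<Gamma>\<close> eq] .
        finally show ?thesis
          by simp
      qed
      then have "u \<in> (joint_range p T \<omega>)\<^sup>\<bottom>"
        by (simp add: orthogonal_comp_def orthogonal_def)
      then show "\<exists>T. finite T \<and> T \<subseteq> S \<and> u \<in> (joint_range p T \<omega>)\<^sup>\<bottom>"
        using T by (auto simp: T_def)
    qed
    then have "u \<bullet> z = 0"
      using z by (simp add: orthogonal_comp_def orthogonal_def)
    moreover have "u \<bullet> z = d \<bullet> d"
      using prod_op_adjoint[of "rev xs"] prod_op_adjoint[of "rev ys"] xs ys
      by (simp add: u_def d_def inner_diff_left inner_diff_right)
    ultimately show "prod_op p xs z = prod_op p ys z"
      by (simp add: d_def)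
  qed
qed

lemma orthogonal_comp_H_pi_subset_closure_F_set: "H\<pi>\<^sup>\<bottom> \<subseteq> closure F"
  using orthogonal_comp_anti_mono[OF orthogonal_comp_F_set_subset_H_pi]
    orthogonal_comp_orthogonal_comp_subset_closure[OF subspace_F_set]
  by blast

lemma closure_F_set_Int_H_pi_subset: "closure (F \<inter> H\<pi>) \<subseteq> H\<pi>"
  using closed_H_pi by (simp add: closure_minimal)

lemma closure_F_set_eq:
  "closure F = {\<phi>. orthogonal_projection H\<pi> \<phi> \<in> closure (F \<inter> H\<pi>)}"
proof (intro equalityI subsetI CollectI)
  fix \<phi> assume "\<phi> \<in> closure F"
  have "orthogonal_projection H\<pi> ` F \<subseteq> closure (F \<inter> H\<pi>)"
    using orthogonal_projection_H_pi_F_set orthogonal_projection_in[OF subspace_H_pi closed_H_pi]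
      closure_subset
    by blast
  then have "orthogonal_projection H\<pi> ` closure F \<subseteq> closure (F \<inter> H\<pi>)"
    using image_closure_subset linear_continuous_on
      bounded_linear_orthogonal_projection[OF subspace_H_pi closed_H_pi] closed_closure
    by blast
  then show "orthogonal_projection H\<pi> \<phi> \<in> closure (F \<inter> H\<pi>)"
    using \<open>\<phi> \<in> closure F\<close> by blast
next
  fix \<phi> assume "\<phi> \<in> {\<phi>. orthogonal_projection H\<pi> \<phi> \<in> closure (F \<inter> H\<pi>)}"
  then have "orthogonal_projection H\<pi> \<phi> \<in> closure F"
    using closure_mono[of "F \<inter> H\<pi>" F] by blast
  moreover have "\<phi> - orthogonal_projection H\<pi> \<phi> \<in> closure F"
    using orthogonal_projection_orthogonal[OF subspace_H_pi closed_H_pi]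
      orthogonal_comp_H_pi_subset_closure_F_set
    by blast
  ultimately have "orthogonal_projection H\<pi> \<phi> + (\<phi> - orthogonal_projection H\<pi> \<phi>) \<in> closure F"
    by (rule subspace_add[OF subspace_closure[OF subspace_F_set]])
  then show "\<phi> \<in> closure F"
    by simp
qed

lemma closure_F_set_eq_sum:
  "closure F = {x + y | x y. x \<in> closure (F \<inter> H\<pi>) \<and> y \<in> H\<pi>\<^sup>\<bottom>}"
proof (intro equalityI subsetI)
  fix \<phi> assume "\<phi> \<in> closure F"
  then have "orthogonal_projection H\<pi> \<phi> \<in> closure (F \<inter> H\<pi>)"
    using closure_F_set_eq by blast
  moreover have "\<phi> - orthogonal_projection H\<pi> \<phi> \<in> H\<pi>\<^sup>\<bottom>"
    using orthogonal_projection_orthogonal[OF subspace_H_pi closed_H_pi] .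
  ultimately show "\<phi> \<in> {x + y | x y. x \<in> closure (F \<inter> H\<pi>) \<and> y \<in> H\<pi>\<^sup>\<bottom>}"
    by force
next
  fix \<phi> assume "\<phi> \<in> {x + y | x y. x \<in> closure (F \<inter> H\<pi>) \<and> y \<in> H\<pi>\<^sup>\<bottom>}"
  then obtain x y where "\<phi> = x + y" "x \<in> closure (F \<inter> H\<pi>)" "y \<in> H\<pi>\<^sup>\<bottom>"
    by blast
  then have "orthogonal_projection H\<pi> \<phi> = x"
    using closure_F_set_Int_H_pi_subset
    by (intro orthogonal_projection_eqI[OF subspace_H_pi closed_H_pi]) auto
  then show "\<phi> \<in> closure F"
    using closure_F_set_eq \<open>x \<in> closure (F \<inter> H\<pi>)\<close> by blast
qed

lemma orthogonal_comp_F_set: "F\<^sup>\<bottom> = (F \<inter> H\<pi>)\<^sup>\<bottom> \<inter> H\<pi>"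
proof (intro equalityI subsetI IntI)
  fix z assume "z \<in> F\<^sup>\<bottom>"
  then show "z \<in> H\<pi>"
    using orthogonal_comp_F_set_subset_H_pi by blast
  show "z \<in> (F \<inter> H\<pi>)\<^sup>\<bottom>"
    using \<open>z \<in> F\<^sup>\<bottom>\<close> orthogonal_comp_anti_mono[of "F \<inter> H\<pi>" F] by blast
next
  fix z assume z: "z \<in> (F \<inter> H\<pi>)\<^sup>\<bottom> \<inter> H\<pi>"
  have "x \<bullet> z = 0" if "x \<in> F" for x
  proof -
    have "x \<bullet> z = orthogonal_projection H\<pi> x \<bullet> z"
      using z orthogonal_projection_self_adjoint[OF subspace_H_pi closed_H_pi, of x z]
        orthogonal_projection_id[OF subspace_H_pi closed_H_pi, of z]
      by simp
    also have "\<dots> = 0"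
      using z orthogonal_projection_H_pi_F_set[OF that]
        orthogonal_projection_in[OF subspace_H_pi closed_H_pi, of x]
      by (simp add: orthogonal_comp_def orthogonal_def)
    finally show ?thesis .
  qed
  then show "z \<in> F\<^sup>\<bottom>"
    by (simp add: orthogonal_comp_def orthogonal_def)
qed

lemma closure_F_set_Int_H_pi: "closure F \<inter> H\<pi> = closure (F \<inter> H\<pi>)"
  using closure_F_set_eq orthogonal_projection_id[OF subspace_H_pi closed_H_pi]
    closure_F_set_Int_H_pi_subset closure_mono[of "F \<inter> H\<pi>" F]
  by auto

end

theorem lemma2:
  fixes J :: "'a::{real_inner, complete_space} \<Rightarrow> 'a"
    and S :: "'s set" and \<Gamma> :: "'s \<Rightarrow> 'g set"
    and p :: "'s \<Rightarrow> 'g \<Rightarrow> 'a \<Rightarrow> 'a"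
    and A :: "('s \<Rightarrow> 'g) set"
  assumes J: "complex_structure J"
    and countable: "\<And>t. t \<in> S \<Longrightarrow> countable (\<Gamma> t)"
    and proj: "\<And>t a. t \<in> S \<Longrightarrow> a \<in> \<Gamma> t \<Longrightarrow> is_projection J (p t a)"
    and resolution: "\<And>t \<phi>. t \<in> S \<Longrightarrow> ((\<lambda>a. p t a \<phi>) has_sum \<phi>) (\<Gamma> t)"
    and A: "A \<subseteq> (\<Pi>\<^sub>E t\<in>S. \<Gamma> t)"
  defines "F \<equiv> F_set J p S A" and "H\<pi> \<equiv> H_pi p S \<Gamma>"
  shows "closure F = {\<phi>. proj_onto J H\<pi> \<phi> \<in> closure (F \<inter> H\<pi>)}
       \<and> closure F = {x + y | x y. x \<in> closure (F \<inter> H\<pi>) \<and> y \<in> orth J H\<pi>}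
       \<and> orth J F = orth J (F \<inter> H\<pi>) \<inter> H\<pi>
       \<and> closure F \<inter> H\<pi> = closure (F \<inter> H\<pi>)"
proof -
  interpret projection_family_subset J S \<Gamma> p A
    using J proj resolution A by unfold_locales
  have "proj_onto J H\<pi> = orthogonal_projection H\<pi>"
    unfolding H\<pi>_def using J_H_pi by (rule proj_onto_eq_orthogonal_projection)
  moreover have "orth J H\<pi> = H\<pi>\<^sup>\<bottom>"
    unfolding H\<pi>_def using J_H_pi by (rule orth_eq_orthogonal_comp)
  moreover have "orth J F = F\<^sup>\<bottom>"
    unfolding F_def using J_F_set by (rule orth_eq_orthogonal_comp)
  moreover have "orth J (F \<inter> H\<pi>) = (F \<inter> H\<pi>)\<^sup>\<bottom>"
    unfolding F_def H\<pi>_def using J_F_set J_H_pi by (intro orth_eq_orthogonal_comp) blast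
  ultimately show ?thesis
    unfolding F_def H\<pi>_def
    using closure_F_set_eq closure_F_set_eq_sum orthogonal_comp_F_set closure_F_set_Int_H_pi
    by simp
qed

end
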